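(* Let $n\ge2$, $\mathbb{Z}_n=\mathbb{Z}/n\mathbb{Z}$, $\mathcal{P}=\{(x_1,\dots,x_{n-1})\in\mathbb{Z}_n^{n-1}\mid x_1,\dots,x_{n-1}\text{ pairwise different}\}$ and $\mathcal{S}=\{r\in\mathbb{Z}_n^{n-1}\mid \exists\,x,y\in\mathcal{P}: r=x+y\}$. Let $\mathbf{1}=(1,\dots,1)\in\mathbb{Z}_n^{n-1}$. Then: (i) $\gamma\mathbf{1}\in\mathcal{S}$ for all $\gamma\in\mathbb{Z}_n$; (ii) if $r\in\mathcal{S}$, then every vector obtained from $r$ by permuting its $n-1$ coordinates lies in $\mathcal{S}$; (iii) if $r\in\mathcal{S}$, then $\gamma r\in\mathcal{S}$ for every unit $\gamma$ of the ring $\mathbb{Z}_n$; (iv) if $r\in\mathcal{S}$, then $r+\gamma\mathbf{1}\in\mathcal{S}$ for all $\gamma\in\mathbb{Z}_n$; (v) $\mathcal{P}\subseteq\mathcal{S}$. *)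

theory Defs
  imports Main "HOL-Combinatorics.Permutations"
begin

text \<open>Elements of Z_n are represented by their canonical representatives in {0..<n} (as int).
  Vectors in Z_n^(n-1) are int lists of length n-1 with entries in {0..<n};
  coordinate i (0-based) is xs ! i.\<close>

definition zvecs :: "nat \<Rightarrow> int list set" where
  "zvecs n = {xs. length xs = n - 1 \<and> set xs \<subseteq> {0..<int n}}"

definition zadd :: "nat \<Rightarrow> int list \<Rightarrow> int list \<Rightarrow> int list" where
  "zadd n xs ys = map2 (\<lambda>a b. (a + b) mod int n) xs ys"

definition zsmult :: "nat \<Rightarrow> int \<Rightarrow> int list \<Rightarrow> int list" where
  "zsmult n c xs = map (\<lambda>a. (c * a) mod int n) xs"

definition zone :: "nat \<Rightarrow> int list" where
  "zone n = replicate (n - 1) (1 mod int n)"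

definition Pset :: "nat \<Rightarrow> int list set" where
  "Pset n = {x \<in> zvecs n. distinct x}"

definition Sset :: "nat \<Rightarrow> int list set" where
  "Sset n = {r. \<exists>x\<in>Pset n. \<exists>y\<in>Pset n. r = zadd n x y}"

definition zunit :: "nat \<Rightarrow> int \<Rightarrow> bool" where
  "zunit n c \<longleftrightarrow> c \<in> {0..<int n} \<and> (\<exists>d\<in>{0..<int n}. (c * d) mod int n = 1 mod int n)"

definition permute_coords :: "(nat \<Rightarrow> nat) \<Rightarrow> int list \<Rightarrow> int list" where
  "permute_coords \<sigma> r = map (\<lambda>i. r ! \<sigma> i) [0..<length r]"

end

theory Submission
  imports Defs "HOL-Number_Theory.Cong"
begin

text \<open>Items (i), (iii) and (iv) all come from one observation: an affine map
  \<open>a \<mapsto> c + u a\<close> with \<open>u\<close> a unit permutes \<open>\<int>\<^sub>n\<close>, so it maps \<open>\<P>\<close> into itself, and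
  such maps can be distributed over the two summands of an element of \<open>\<S>\<close>.
  For (v), write \<open>x \<in> \<P>\<close> as \<open>y + z\<close>: for odd \<open>n\<close> take \<open>y = z = x/2\<close>.
  For even \<open>n = 2k\<close>, some residue \<open>m\<close> is missing from the \<open>n - 1\<close> coordinates
  of \<open>x\<close>; by (iv) it suffices to treat \<open>x - m\<one>\<close>, whose coordinates are
  distinct and nonzero, and every nonzero residue \<open>w\<close> is split as
  \<open>w = Y(w) + Z(w)\<close> with \<open>Y\<close> and \<open>Z\<close> both injective on \<open>{1, \<dots>, n - 1}\<close>.\<close>

lemma length_zadd [simp]: "length (zadd n xs ys) = min (length xs) (length ys)"
  by (simp add: zadd_def)

lemma nth_zadd [simp]:
  "i < length xs \<Longrightarrow> i < length ys \<Longrightarrow> zadd n xs ys ! i = (xs ! i + ys ! i) mod int n"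
  by (simp add: zadd_def)

lemma length_Pset: "x \<in> Pset n \<Longrightarrow> length x = n - 1"
  by (simp add: Pset_def zvecs_def)

lemma zadd_in_Sset: "x \<in> Pset n \<Longrightarrow> y \<in> Pset n \<Longrightarrow> zadd n x y \<in> Sset n"
  by (auto simp: Sset_def)

lemma SsetE:
  assumes "r \<in> Sset n"
  obtains x y where "x \<in> Pset n" "y \<in> Pset n" "r = zadd n x y"
  using assms by (auto simp: Sset_def)

lemma zsmult_zone: "\<gamma> \<in> {0..<int n} \<Longrightarrow> zsmult n \<gamma> (zone n) = replicate (n - 1) \<gamma>"
  by (simp add: zsmult_def zone_def)

lemma map_in_Pset:
  assumes "x \<in> Pset n" "inj_on f (set x)" "f ` set x \<subseteq> {0..<int n}"
  shows "map f x \<in> Pset n"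
  using assms by (auto simp: Pset_def zvecs_def distinct_map)

lemma inj_on_affine_mod:
  fixes N c u d :: int
  assumes "(u * d) mod N = 1 mod N"
  shows "inj_on (\<lambda>a. (c + u * a) mod N) {0..<N}"
proof (rule inj_onI)
  fix a b
  assume a: "a \<in> {0..<N}" and b: "b \<in> {0..<N}"
    and "(c + u * a) mod N = (c + u * b) mod N"
  then have "[u * a = u * b] (mod N)"
    by (simp add: cong_def [symmetric] cong_add_lcancel)
  then have "[d * u * a = d * u * b] (mod N)"
    by (metis cong_scalar_left mult.assoc)
  moreover have "[d * u = 1] (mod N)"
    using assms by (simp add: cong_def mult.commute)
  ultimately have "[a = b] (mod N)"
    by (metis cong_scalar_right cong_sym cong_trans mult_1)
  then show "a = b"
    using a b by (auto intro: cong_less_imp_eq_int)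
qed

lemma map_affine_in_Pset:
  assumes "x \<in> Pset n" "(u * d) mod int n = 1 mod int n"
  shows "map (\<lambda>a. (c + u * a) mod int n) x \<in> Pset n"
proof (rule map_in_Pset [OF assms(1)])
  have "set x \<subseteq> {0..<int n}"
    using assms(1) by (simp add: Pset_def zvecs_def)
  then show "inj_on (\<lambda>a. (c + u * a) mod int n) (set x)"
    using inj_on_affine_mod [OF assms(2)] by (rule inj_on_subset [rotated])
  show "(\<lambda>a. (c + u * a) mod int n) ` set x \<subseteq> {0..<int n}"
    using \<open>set x \<subseteq> {0..<int n}\<close> by auto
qed

lemma zsmult_in_Pset:
  assumes "x \<in> Pset n" "(u * d) mod int n = 1 mod int n"
  shows "zsmult n u x \<in> Pset n"
  using map_affine_in_Pset [OF assms, of 0] by (simp add: zsmult_def)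

lemma zone_smult_in_Sset:
  assumes "\<gamma> \<in> {0..<int n}"
  shows "zsmult n \<gamma> (zone n) \<in> Sset n"
proof -
  define x where "x = map int [0..<n - 1]"
  define y where "y = map (\<lambda>a. (\<gamma> + (-1) * a) mod int n) x"
  have x: "x \<in> Pset n"
    by (auto simp: x_def Pset_def zvecs_def distinct_map)
  then have y: "y \<in> Pset n"
    unfolding y_def by (rule map_affine_in_Pset [where d = "-1"]) simp
  have "zsmult n \<gamma> (zone n) = zadd n x y"
    using assms by (intro nth_equalityI) (auto simp: zsmult_zone x_def y_def mod_add_right_eq)
  then show ?thesis
    using x y by (simp add: zadd_in_Sset)
qed

lemma permute_coords_in_Pset:
  assumes x: "x \<in> Pset n" and \<sigma>: "\<sigma> permutes {..<n - 1}"
  shows "permute_coords \<sigma> x \<in> Pset n"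
proof -
  have len: "length x = n - 1" and "distinct x"
    using x by (auto simp: Pset_def zvecs_def)
  have \<sigma>_range: "\<sigma> i < n - 1" if "i < n - 1" for i
    using \<sigma> that permutes_in_image by fastforce
  have "inj_on (\<lambda>i. x ! \<sigma> i) {0..<n - 1}"
  proof (rule inj_onI)
    fix i j assume "i \<in> {0..<n - 1}" "j \<in> {0..<n - 1}" "x ! \<sigma> i = x ! \<sigma> j"
    then have "\<sigma> i = \<sigma> j"
      using \<sigma>_range len \<open>distinct x\<close> by (simp add: nth_eq_iff_index_eq)
    then show "i = j"
      using permutes_inj [OF \<sigma>] by (simp add: inj_eq)
  qed
  moreover have "set (permute_coords \<sigma> x) \<subseteq> set x"
    using \<sigma>_range len by (auto simp: permute_coords_def)
  ultimately show ?thesis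
    using x len by (auto simp: Pset_def zvecs_def permute_coords_def distinct_map)
qed

lemma permute_coords_zadd:
  assumes "length x = n - 1" "length y = n - 1" "\<sigma> permutes {..<n - 1}"
  shows "permute_coords \<sigma> (zadd n x y) = zadd n (permute_coords \<sigma> x) (permute_coords \<sigma> y)"
proof -
  have "\<sigma> i < n - 1" if "i < n - 1" for i
    using assms(3) that permutes_in_image by fastforce
  then show ?thesis
    using assms by (intro nth_equalityI) (auto simp: permute_coords_def)
qed

lemma permute_coords_in_Sset:
  assumes "r \<in> Sset n" "\<sigma> permutes {..<n - 1}"
  shows "permute_coords \<sigma> r \<in> Sset n"
proof -
  obtain x y where "x \<in> Pset n" "y \<in> Pset n" "r = zadd n x y"
    using assms(1) by (rule SsetE)
  then show ?thesis
    using assms(2) by (simp add: permute_coords_zadd length_Pset permute_coords_in_Pset zadd_in_Sset)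
qed

lemma unit_smult_in_Sset:
  assumes "r \<in> Sset n" "zunit n \<gamma>"
  shows "zsmult n \<gamma> r \<in> Sset n"
proof -
  obtain x y where xy: "x \<in> Pset n" "y \<in> Pset n" "r = zadd n x y"
    using assms(1) by (rule SsetE)
  obtain d where d: "(\<gamma> * d) mod int n = 1 mod int n"
    using assms(2) by (auto simp: zunit_def)
  have "zsmult n \<gamma> r = zadd n (zsmult n \<gamma> x) (zsmult n \<gamma> y)"
    using xy length_Pset [OF xy(1)] length_Pset [OF xy(2)]
    by (intro nth_equalityI) (auto simp: zsmult_def mod_mult_right_eq mod_add_eq distrib_left)
  then show ?thesis
    using xy d by (simp add: zsmult_in_Pset zadd_in_Sset)
qed

lemma shift_in_Sset:
  assumes "r \<in> Sset n" "\<gamma> \<in> {0..<int n}"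
  shows "zadd n r (zsmult n \<gamma> (zone n)) \<in> Sset n"
proof -
  obtain x y where xy: "x \<in> Pset n" "y \<in> Pset n" "r = zadd n x y"
    using assms(1) by (rule SsetE)
  define y' where "y' = map (\<lambda>b. (\<gamma> + 1 * b) mod int n) y"
  have y': "y' \<in> Pset n"
    unfolding y'_def using xy(2) by (rule map_affine_in_Pset [where d = 1]) simp
  have "zadd n r (zsmult n \<gamma> (zone n)) = zadd n x y'"
    using xy length_Pset [OF xy(1)] length_Pset [OF xy(2)] assms(2)
    by (intro nth_equalityI)
      (auto simp: zsmult_zone y'_def mod_add_left_eq mod_add_right_eq ac_simps)
  then show ?thesis
    using xy(1) y' by (simp add: zadd_in_Sset)
qed

text \<open>Splitting of a nonzero residue \<open>w\<close> modulo \<open>2k\<close>: for \<open>w = 2j + 1\<close> the summands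
  are \<open>j\<close> and \<open>j + 1\<close>; for \<open>w = 2j\<close> they are \<open>j + k - 1\<close> and \<open>j + k + 1\<close> (summing to
  \<open>w + 2k\<close>), except that \<open>w = 2k - 2\<close> is split as \<open>(2k - 2) + 0\<close>. The first summand
  sends odd \<open>w\<close> into \<open>[0, k - 1]\<close> and even \<open>w\<close> into \<open>[k, 2k - 2]\<close>; the second sends
  odd \<open>w\<close> into \<open>[1, k]\<close> and even \<open>w\<close> into \<open>{0} \<union> [k + 2, 2k - 1]\<close>, hence both are injective.\<close>

definition even_split_fst :: "int \<Rightarrow> int \<Rightarrow> int" where
  "even_split_fst k w = (if odd w then (w - 1) div 2 else w div 2 + k - 1)"

definition even_split_snd :: "int \<Rightarrow> int \<Rightarrow> int" where
  "even_split_snd k w =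
    (if odd w then (w + 1) div 2 else if w = 2 * k - 2 then 0 else w div 2 + k + 1)"

lemma int_even_odd_cases:
  fixes w :: int
  obtains (even) j where "w = 2 * j" | (odd) j where "w = 2 * j + 1"
  by (cases "even w") (auto elim: evenE oddE)

lemma even_split_fst_simps [simp]:
  "even_split_fst k (2 * j) = j + k - 1"
  "even_split_fst k (2 * j + 1) = j"
  by (simp_all add: even_split_fst_def)

lemma even_split_snd_simps [simp]:
  "even_split_snd k (2 * j) = (if j = k - 1 then 0 else j + k + 1)"
  "even_split_snd k (2 * j + 1) = j + 1"
  by (simp_all add: even_split_snd_def)

lemma even_split_fst_range: "w \<in> {1..<2 * k} \<Longrightarrow> even_split_fst k w \<in> {0..<2 * k}"
  by (cases w rule: int_even_odd_cases) auto

lemma even_split_snd_range: "w \<in> {1..<2 * k} \<Longrightarrow> even_split_snd k w \<in> {0..<2 * k}"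
  by (cases w rule: int_even_odd_cases) auto

lemma inj_on_even_split_fst: "inj_on (even_split_fst k) {1..<2 * k}"
proof (rule inj_onI)
  fix w w'
  assume "w \<in> {1..<2 * k}" "w' \<in> {1..<2 * k}" "even_split_fst k w = even_split_fst k w'"
  then show "w = w'"
    by (cases w rule: int_even_odd_cases; cases w' rule: int_even_odd_cases) auto
qed

lemma inj_on_even_split_snd: "inj_on (even_split_snd k) {1..<2 * k}"
proof (rule inj_onI)
  fix w w'
  assume "w \<in> {1..<2 * k}" "w' \<in> {1..<2 * k}" "even_split_snd k w = even_split_snd k w'"
  then show "w = w'"
    by (cases w rule: int_even_odd_cases; cases w' rule: int_even_odd_cases) (auto split: if_splits)
qed

lemma even_split_sum:
  assumes "w \<in> {1..<2 * k}"
  shows "(even_split_fst k w + even_split_snd k w) mod (2 * k) = w"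
proof -
  have "even_split_fst k w + even_split_snd k w \<in> {w, w + 2 * k}"
    by (cases w rule: int_even_odd_cases) auto
  then show ?thesis
    using assms by auto
qed

lemma Pset_in_Sset_odd:
  assumes "odd n" "x \<in> Pset n"
  shows "x \<in> Sset n"
proof -
  obtain j where n: "n = 2 * j + 1"
    using assms(1) by (rule oddE)
  define h where "h = int j + 1"
  have h2: "2 * h = int n + 1"
    by (simp add: h_def n)
  then have "(h * 2) mod int n = 1 mod int n"
    by (simp add: mult.commute)
  then have y: "zsmult n h x \<in> Pset n"
    using assms(2) by (rule zsmult_in_Pset [rotated])
  have halve: "(h * a mod int n + h * a mod int n) mod int n = a" if "a \<in> {0..<int n}" for a
  proof -
    have "(h * a mod int n + h * a mod int n) mod int n = (h * a + h * a) mod int n"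
      by (rule mod_add_eq)
    also have "h * a + h * a = int n * a + a"
      using h2 by (metis mult_2 distrib_right mult_1)
    also have "(int n * a + a) mod int n = a"
      using that by simp
    finally show ?thesis .
  qed
  have range: "set x \<subseteq> {0..<int n}"
    using assms(2) by (simp add: Pset_def zvecs_def)
  have "zadd n (zsmult n h x) (zsmult n h x) = x"
  proof (rule nth_equalityI)
    fix i
    assume "i < length (zadd n (zsmult n h x) (zsmult n h x))"
    then have "i < length x"
      by (simp add: zsmult_def)
    moreover from this have "x ! i \<in> {0..<int n}"
      using range nth_mem by blast
    ultimately show "zadd n (zsmult n h x) (zsmult n h x) ! i = x ! i"
      by (simp only: zsmult_def nth_zadd length_map nth_map halve)
  qed (simp add: zsmult_def)
  then show ?thesis
    using zadd_in_Sset [OF y y] by simp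
qed

lemma Pset_in_Sset_even_nonzero:
  assumes "even n" "x \<in> Pset n" "0 \<notin> set x"
  shows "x \<in> Sset n"
proof -
  define k where "k = int n div 2"
  have n: "int n = 2 * k"
    using assms(1) by (simp add: k_def)
  have "set x \<subseteq> {0..<2 * k}"
    using assms(2) n by (simp add: Pset_def zvecs_def)
  then have range: "set x \<subseteq> {1..<2 * k}"
    using assms(3) by (auto simp: subset_eq order_le_less)
  have "map (even_split_fst k) x \<in> Pset n"
    using assms(2) inj_on_subset [OF inj_on_even_split_fst range] even_split_fst_range range n
    by (intro map_in_Pset) auto
  moreover have "map (even_split_snd k) x \<in> Pset n"
    using assms(2) inj_on_subset [OF inj_on_even_split_snd range] even_split_snd_range range n
    by (intro map_in_Pset) auto
  moreover have "(even_split_fst k a + even_split_snd k a) mod int n = a" if "a \<in> set x" for a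
    using that range n by (simp add: even_split_sum subset_eq)
  then have "zadd n (map (even_split_fst k) x) (map (even_split_snd k) x) = x"
    by (intro nth_equalityI) simp_all
  ultimately show ?thesis
    by (metis zadd_in_Sset)
qed

lemma Pset_missing_residue:
  assumes "x \<in> Pset n" "0 < n"
  obtains m where "m \<in> {0..<int n}" "m \<notin> set x"
proof -
  have "card (set x) < card {0..<int n}"
    using card_length [of x] length_Pset [OF assms(1)] assms(2) by simp
  then have "\<not> {0..<int n} \<subseteq> set x"
    by (meson card_mono finite_set not_le)
  then show thesis
    using that by blast
qed

lemma Pset_in_Sset_even:
  assumes "even n" "0 < n" "x \<in> Pset n"
  shows "x \<in> Sset n"
proof -
  obtain m where m: "m \<in> {0..<int n}" "m \<notin> set x"
    using assms(3,2) by (rule Pset_missing_residue)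
  define f where "f = (\<lambda>a. (- m + 1 * a) mod int n)"
  have range: "set x \<subseteq> {0..<int n}"
    using assms(3) by (simp add: Pset_def zvecs_def)
  have fx: "map f x \<in> Pset n"
    unfolding f_def using assms(3) by (rule map_affine_in_Pset [where d = 1]) simp
  have "inj_on f {0..<int n}"
    unfolding f_def by (rule inj_on_affine_mod [where d = 1]) simp
  moreover have "f m = 0"
    by (simp add: f_def)
  ultimately have "0 \<notin> set (map f x)"
    using inj_on_image_mem_iff [of f "{0..<int n}" m "set x"] m range by simp
  then have "map f x \<in> Sset n"
    using Pset_in_Sset_even_nonzero [OF assms(1) fx] by simp
  moreover have "(f a + m) mod int n = a" if "a \<in> set x" for a
    using that range by (auto simp: f_def mod_add_left_eq)
  then have "zadd n (map f x) (zsmult n m (zone n)) = x"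
    using m(1) length_Pset [OF assms(3)]
    by (intro nth_equalityI) (simp_all add: zsmult_zone nth_mem)
  ultimately show ?thesis
    using shift_in_Sset [OF _ m(1)] by metis
qed

lemma Pset_subset_Sset:
  assumes "0 < n"
  shows "Pset n \<subseteq> Sset n"
proof
  fix x
  assume "x \<in> Pset n"
  then show "x \<in> Sset n"
    using Pset_in_Sset_odd Pset_in_Sset_even [OF _ assms] by blast
qed

theorem proposition5p1:
  fixes n :: nat
  assumes "n \<ge> 2"
  shows "(\<forall>\<gamma>\<in>{0..<int n}. zsmult n \<gamma> (zone n) \<in> Sset n)
    \<and> (\<forall>r\<in>Sset n. \<forall>\<sigma>. \<sigma> permutes {..<n - 1} \<longrightarrow> permute_coords \<sigma> r \<in> Sset n)
    \<and> (\<forall>r\<in>Sset n. \<forall>\<gamma>. zunit n \<gamma> \<longrightarrow> zsmult n \<gamma> r \<in> Sset n)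
    \<and> (\<forall>r\<in>Sset n. \<forall>\<gamma>\<in>{0..<int n}. zadd n r (zsmult n \<gamma> (zone n)) \<in> Sset n)
    \<and> Pset n \<subseteq> Sset n"
proof (intro conjI ballI allI impI)
  show "zsmult n \<gamma> (zone n) \<in> Sset n" if "\<gamma> \<in> {0..<int n}" for \<gamma>
    using that by (rule zone_smult_in_Sset)
  show "permute_coords \<sigma> r \<in> Sset n" if "r \<in> Sset n" "\<sigma> permutes {..<n - 1}" for r \<sigma>
    using that by (rule permute_coords_in_Sset)
  show "zsmult n \<gamma> r \<in> Sset n" if "r \<in> Sset n" "zunit n \<gamma>" for r \<gamma>
    using that by (rule unit_smult_in_Sset)
  show "zadd n r (zsmult n \<gamma> (zone n)) \<in> Sset n" if "r \<in> Sset n" "\<gamma> \<in> {0..<int n}" for r \<gamma>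
    using that by (rule shift_in_Sset)
  show "Pset n \<subseteq> Sset n"
    using assms by (intro Pset_subset_Sset) simp
qed

end
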